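(* Let $\sigma_1,\sigma_2>0$, $\beta\in(0,1)$, $r\in(0,1)$ be fixed, and let $n\to\infty$ and $p\to\infty$ with $\log(n)/p\to0$. Set $\epsilon=n^{-\beta}$ and $A=\sqrt{2r\log n}$. Consider the testing problem for $n$ i.i.d. observations $\mathbf X_1,\dots,\mathbf X_n\in\mathbb R^p$: \[ H_0:\ \mathbf X_i\sim N(0\cdot\mathbf 1_p,\sigma_1^2\mathbf I_p),\qquad H_1:\ \mathbf X_i\sim(1-\epsilon)N(0\cdot\mathbf 1_p,\sigma_1^2\mathbf I_p)+\epsilon N(A\mathbf 1_p,\sigma_2^2\mathbf I_p),\quad 1\le i\le n. \] Then for the likelihood ratio test (rejecting $H_0$ when the likelihood ratio of $H_1$ to $H_0$ exceeds $1$), the sum of the type I and type II error probabilities tends to $0$.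
   Context: $\mathbf 1_p$ is the all-ones vector in $\mathbb R^p$ and $\mathbf I_p$ the $p\times p$ identity; both hypotheses are simple (all parameters known). *)

theory Defs
  imports "HOL-Probability.Probability"
begin

text \<open>Density of N(mu * 1_p, sigma^2 I_p) on R^p, with R^p represented by
  functions nat => real restricted to the index set {..<p}.\<close>
definition gauss_vec_density :: "nat \<Rightarrow> real \<Rightarrow> real \<Rightarrow> (nat \<Rightarrow> real) \<Rightarrow> real" where
  "gauss_vec_density p mu sd x = (\<Prod>j<p. normal_density mu sd (x j))"

definition obs_space :: "nat \<Rightarrow> (nat \<Rightarrow> real) measure" where
  "obs_space p = PiM {..<p} (\<lambda>_. lborel)"

definition sample_space :: "nat \<Rightarrow> nat \<Rightarrow> (nat \<Rightarrow> nat \<Rightarrow> real) measure" where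
  "sample_space n p = PiM {..<n} (\<lambda>_. obs_space p)"

definition lik0 :: "nat \<Rightarrow> nat \<Rightarrow> real \<Rightarrow> (nat \<Rightarrow> nat \<Rightarrow> real) \<Rightarrow> real" where
  "lik0 n p s1 X = (\<Prod>i<n. gauss_vec_density p 0 s1 (X i))"

definition lik1 :: "nat \<Rightarrow> nat \<Rightarrow> real \<Rightarrow> real \<Rightarrow> real \<Rightarrow> real \<Rightarrow> (nat \<Rightarrow> nat \<Rightarrow> real) \<Rightarrow> real" where
  "lik1 n p s1 s2 eps A X =
     (\<Prod>i<n. (1 - eps) * gauss_vec_density p 0 s1 (X i) + eps * gauss_vec_density p A s2 (X i))"

definition law0 where
  "law0 n p s1 = density (sample_space n p) (\<lambda>X. ennreal (lik0 n p s1 X))"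

definition law1 where
  "law1 n p s1 s2 eps A = density (sample_space n p) (\<lambda>X. ennreal (lik1 n p s1 s2 eps A X))"

definition lrt_reject where
  "lrt_reject n p s1 s2 eps A =
     {X \<in> space (sample_space n p). lik1 n p s1 s2 eps A X / lik0 n p s1 X > 1}"

definition lrt_total_error where
  "lrt_total_error n p s1 s2 eps A =
     measure (law0 n p s1) (lrt_reject n p s1 s2 eps A)
   + measure (law1 n p s1 s2 eps A) (space (sample_space n p) - lrt_reject n p s1 s2 eps A)"

end

theory Submission
  imports Defs "HOL-Real_Asymp.Real_Asymp"
begin

text \<open>The sum of the two error probabilities of the likelihood ratio test is
  \<open>\<integral> min(L\<^sub>0, L\<^sub>1) \<le> \<integral> sqrt(L\<^sub>0 L\<^sub>1)\<close>, the Hellinger affinity of the two laws.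
  The affinity factorises over the \<open>n\<close> observations, and for a single one
  \<open>sqrt(f\<^sub>0 ((1 - \<epsilon>) f\<^sub>0 + \<epsilon> f\<^sub>1)) \<le> sqrt(1 - \<epsilon>) f\<^sub>0 + sqrt \<epsilon> sqrt(f\<^sub>0 f\<^sub>1)\<close>.
  The affinity of two Gaussians is explicit (complete the square); over \<open>p\<close> coordinates it is
  at most \<open>exp(-A\<^sup>2 / (4(\<sigma>\<^sub>1\<^sup>2 + \<sigma>\<^sub>2\<^sup>2)))\<^sup>p = n\<^bsup>-rp/(2(\<sigma>\<^sub>1\<^sup>2 + \<sigma>\<^sub>2\<^sup>2))\<^esup>\<close>, which is
  below \<open>1/n\<close> as soon as \<open>p\<close> is large. The total error is then at most
  \<open>(1 - \<epsilon>/4)\<^sup>n \<le> exp(-n\<^bsup>1-\<beta>\<^esup>/4) \<rightarrow> 0\<close>.\<close>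

lemma completing_square:
  fixes m1 m2 s1 s2 t :: real
  assumes "s1 > 0" "s2 > 0"
  defines "S \<equiv> s1\<^sup>2 + s2\<^sup>2"
  shows "-((t - m1)\<^sup>2) / (2 * s1\<^sup>2) - (t - m2)\<^sup>2 / (2 * s2\<^sup>2)
       = -((m1 - m2)\<^sup>2) / (2 * S) - (t - (m1 * s2\<^sup>2 + m2 * s1\<^sup>2) / S)\<^sup>2 / (2 * (s1\<^sup>2 * s2\<^sup>2 / S))"
proof -
  define M where "M = m1 * s2\<^sup>2 + m2 * s1\<^sup>2"
  have S: "S > 0" unfolding S_def using assms by (simp add: add_pos_pos)
  have poly: "(t - m1)\<^sup>2 * s2\<^sup>2 * S + (t - m2)\<^sup>2 * s1\<^sup>2 * S = (m1 - m2)\<^sup>2 * s1\<^sup>2 * s2\<^sup>2 + (t * S - M)\<^sup>2"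
    unfolding S_def M_def by algebra
  have "-((t - m1)\<^sup>2) / (2 * s1\<^sup>2) - (t - m2)\<^sup>2 / (2 * s2\<^sup>2)
      = -((t - m1)\<^sup>2 * s2\<^sup>2 * S + (t - m2)\<^sup>2 * s1\<^sup>2 * S) / (2 * s1\<^sup>2 * s2\<^sup>2 * S)"
    using assms(1,2) S by (simp add: field_simps)
  also have "\<dots> = -((m1 - m2)\<^sup>2 * s1\<^sup>2 * s2\<^sup>2 + (t * S - M)\<^sup>2) / (2 * s1\<^sup>2 * s2\<^sup>2 * S)"
    unfolding poly ..
  also have "\<dots> = -((m1 - m2)\<^sup>2) / (2 * S) - (t - M / S)\<^sup>2 / (2 * (s1\<^sup>2 * s2\<^sup>2 / S))"
    using assms(1,2) S by (simp add: field_simps power2_eq_square)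
  finally show ?thesis unfolding M_def .
qed

lemma normal_density_sqrt_mult:
  fixes m1 m2 s1 s2 t :: real
  assumes "s1 > 0" "s2 > 0"
  defines "S \<equiv> s1\<^sup>2 + s2\<^sup>2"
  shows "sqrt (normal_density m1 s1 t * normal_density m2 s2 t) =
     sqrt (2 * s1 * s2 / S) * exp (-((m1 - m2)\<^sup>2) / (4 * S)) *
     normal_density ((m1 * s2\<^sup>2 + m2 * s1\<^sup>2) / S) (sqrt (2 * s1\<^sup>2 * s2\<^sup>2 / S)) t"
proof -
  define m v where "m = (m1 * s2\<^sup>2 + m2 * s1\<^sup>2) / S" and "v = s1\<^sup>2 * s2\<^sup>2 / S"
  have S: "S > 0" unfolding S_def using assms(1,2) by (simp add: add_pos_pos)
  have v: "v > 0" unfolding v_def using S assms(1,2) by simp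
  have "sqrt (2 * pi * s1\<^sup>2) * sqrt (2 * pi * s2\<^sup>2) = sqrt ((2 * pi * s1 * s2)\<^sup>2)"
    by (simp flip: real_sqrt_mult add: power2_eq_square mult_ac)
  then have "normal_density m1 s1 t * normal_density m2 s2 t
      = 1 / (2 * pi * s1 * s2) * exp (-((t - m1)\<^sup>2) / (2 * s1\<^sup>2) - (t - m2)\<^sup>2 / (2 * s2\<^sup>2))"
    unfolding normal_density_def using assms(1,2) by (simp flip: exp_add)
  also have "\<dots> = 1 / (2 * pi * s1 * s2) * exp (-((m1 - m2)\<^sup>2) / (2 * S) - (t - m)\<^sup>2 / (2 * v))"
    unfolding completing_square[OF assms(1,2), folded S_def] m_def v_def ..
  also have "\<dots> = 2 * s1 * s2 / S / (4 * pi * v) *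
      (exp (-((m1 - m2)\<^sup>2) / (4 * S)) * exp (-((t - m)\<^sup>2) / (4 * v)))\<^sup>2"
  proof -
    have "1 / (2 * pi * s1 * s2) = 2 * s1 * s2 / S / (4 * pi * v)"
      unfolding v_def using S assms(1,2) by (simp add: field_simps power2_eq_square)
    moreover have "exp (-((m1 - m2)\<^sup>2) / (2 * S) - (t - m)\<^sup>2 / (2 * v))
        = (exp (-((m1 - m2)\<^sup>2) / (4 * S)) * exp (-((t - m)\<^sup>2) / (4 * v)))\<^sup>2"
      by (simp flip: exp_add exp_of_nat_mult)
    ultimately show ?thesis by simp
  qed
  also have "\<dots> = (sqrt (2 * s1 * s2 / S) * exp (-((m1 - m2)\<^sup>2) / (4 * S)) *
     normal_density m (sqrt (2 * v)) t)\<^sup>2"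
    unfolding normal_density_def using S v assms(1,2)
    by (simp add: power_mult_distrib power_divide)
  finally have sq: "normal_density m1 s1 t * normal_density m2 s2 t = (sqrt (2 * s1 * s2 / S) *
      exp (-((m1 - m2)\<^sup>2) / (4 * S)) * normal_density m (sqrt (2 * v)) t)\<^sup>2" .
  have v2: "2 * v = 2 * s1\<^sup>2 * s2\<^sup>2 / S" unfolding v_def by simp
  show ?thesis
    by (rule real_sqrt_unique[OF sq[unfolded v2 m_def, symmetric]])
      (use S assms(1,2) in simp)
qed

lemma nn_integral_normal_density:
  "s > 0 \<Longrightarrow> (\<integral>\<^sup>+t. ennreal (normal_density m s t) \<partial>lborel) = 1"
  by (subst nn_integral_eq_integral) auto

lemma nn_integral_normal_density_affinity:
  fixes m1 m2 s1 s2 :: real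
  assumes "s1 > 0" "s2 > 0"
  defines "S \<equiv> s1\<^sup>2 + s2\<^sup>2"
  shows "(\<integral>\<^sup>+t. ennreal (sqrt (normal_density m1 s1 t * normal_density m2 s2 t)) \<partial>lborel)
       = ennreal (sqrt (2 * s1 * s2 / S) * exp (-((m1 - m2)\<^sup>2) / (4 * S)))"
proof -
  have S: "S > 0" unfolding S_def using assms(1,2) by (simp add: add_pos_pos)
  have "sqrt (2 * s1\<^sup>2 * s2\<^sup>2 / S) > 0" using S assms(1,2) by simp
  then show ?thesis
    unfolding normal_density_sqrt_mult[OF assms(1,2), folded S_def]
    using S assms(1,2)
    by (simp add: ennreal_mult' nn_integral_cmult nn_integral_normal_density)
qed

lemma nn_integral_normal_density_affinity_le:
  fixes m1 m2 s1 s2 :: real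
  assumes "s1 > 0" "s2 > 0"
  shows "(\<integral>\<^sup>+t. ennreal (sqrt (normal_density m1 s1 t * normal_density m2 s2 t)) \<partial>lborel)
       \<le> ennreal (exp (-((m1 - m2)\<^sup>2) / (4 * (s1\<^sup>2 + s2\<^sup>2))))"
proof -
  have S: "s1\<^sup>2 + s2\<^sup>2 > 0" using assms by (simp add: add_pos_pos)
  have "sqrt (2 * s1 * s2 / (s1\<^sup>2 + s2\<^sup>2)) \<le> 1"
    using sum_squares_bound[of s1 s2] S by simp
  then show ?thesis
    unfolding nn_integral_normal_density_affinity[OF assms]
    using assms by (intro ennreal_leI mult_left_le_one_le) auto
qed

lemma sigma_finite_PiM_power:
  assumes "sigma_finite_measure M" "finite I"
  shows "sigma_finite_measure (PiM I (\<lambda>_. M))"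
proof -
  interpret product_sigma_finite "\<lambda>_. M" using assms(1) by (simp add: product_sigma_finite_def)
  show ?thesis using assms(2) by (rule sigma_finite)
qed

lemma nn_integral_PiM_prod_power:
  fixes f :: "'a \<Rightarrow> ennreal"
  assumes "sigma_finite_measure M" "finite I" "f \<in> borel_measurable M"
  shows "(\<integral>\<^sup>+x. (\<Prod>i\<in>I. f (x i)) \<partial>PiM I (\<lambda>_. M)) = (\<integral>\<^sup>+x. f x \<partial>M) ^ card I"
proof -
  interpret product_sigma_finite "\<lambda>_. M" using assms(1) by (simp add: product_sigma_finite_def)
  show ?thesis using assms(2,3) by (subst product_nn_integral_prod) auto
qed

lemma sigma_finite_obs_space: "sigma_finite_measure (obs_space p)"
  unfolding obs_space_def by (intro sigma_finite_PiM_power sigma_finite_lborel) simp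

lemma real_sqrt_prod: "sqrt (prod f A) = (\<Prod>i\<in>A. sqrt (f i))"
  by (induction A rule: infinite_finite_induct) (auto simp: real_sqrt_mult)

lemma gauss_vec_density_nonneg: "gauss_vec_density p m s x \<ge> 0"
  unfolding gauss_vec_density_def by (intro prod_nonneg) auto

lemma gauss_vec_density_pos: "s > 0 \<Longrightarrow> gauss_vec_density p m s x > 0"
  unfolding gauss_vec_density_def by (intro prod_pos) (auto intro: normal_density_pos)

lemma borel_measurable_gauss_vec_density[measurable]:
  "gauss_vec_density p m s \<in> borel_measurable (obs_space p)"
  unfolding gauss_vec_density_def[abs_def] obs_space_def by measurable

lemma nn_integral_gauss_vec_density:
  assumes "s > 0"
  shows "(\<integral>\<^sup>+x. ennreal (gauss_vec_density p m s x) \<partial>obs_space p) = 1"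
  using nn_integral_PiM_prod_power[OF sigma_finite_lborel, of "{..<p}" "\<lambda>t. ennreal (normal_density m s t)"]
  unfolding gauss_vec_density_def obs_space_def
  by (simp add: prod_ennreal nn_integral_normal_density[OF assms])

lemma nn_integral_gauss_vec_density_affinity_le:
  fixes m1 m2 s1 s2 :: real
  assumes "s1 > 0" "s2 > 0"
  shows "(\<integral>\<^sup>+x. ennreal (sqrt (gauss_vec_density p m1 s1 x * gauss_vec_density p m2 s2 x)) \<partial>obs_space p)
       \<le> ennreal (exp (-((m1 - m2)\<^sup>2) / (4 * (s1\<^sup>2 + s2\<^sup>2))) ^ p)"
proof -
  let ?h = "\<lambda>t. ennreal (sqrt (normal_density m1 s1 t * normal_density m2 s2 t))"
  have "(\<integral>\<^sup>+x. ennreal (sqrt (gauss_vec_density p m1 s1 x * gauss_vec_density p m2 s2 x)) \<partial>obs_space p)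
      = (\<integral>\<^sup>+t. ?h t \<partial>lborel) ^ p"
    using nn_integral_PiM_prod_power[OF sigma_finite_lborel, of "{..<p}" ?h]
    unfolding gauss_vec_density_def obs_space_def
    by (simp add: prod_ennreal real_sqrt_prod flip: prod.distrib)
  also have "\<dots> \<le> ennreal (exp (-((m1 - m2)\<^sup>2) / (4 * (s1\<^sup>2 + s2\<^sup>2)))) ^ p"
    by (intro power_mono nn_integral_normal_density_affinity_le assms) simp
  finally show ?thesis by (simp add: ennreal_power)
qed

lemma nn_integral_sqrt_mixture_le:
  fixes f g :: "'a \<Rightarrow> real" and eps :: real
  assumes [measurable]: "f \<in> borel_measurable M" "g \<in> borel_measurable M"
    and "\<And>x. f x \<ge> 0" "\<And>x. g x \<ge> 0" "0 \<le> eps" "eps \<le> 1"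
    and f1: "(\<integral>\<^sup>+x. ennreal (f x) \<partial>M) = 1"
  shows "(\<integral>\<^sup>+x. ennreal (sqrt (f x * ((1 - eps) * f x + eps * g x))) \<partial>M)
       \<le> ennreal (sqrt (1 - eps)) + ennreal (sqrt eps) * (\<integral>\<^sup>+x. ennreal (sqrt (f x * g x)) \<partial>M)"
proof -
  have "(\<integral>\<^sup>+x. ennreal (sqrt (f x * ((1 - eps) * f x + eps * g x))) \<partial>M)
      \<le> (\<integral>\<^sup>+x. ennreal (sqrt (1 - eps)) * ennreal (f x) + ennreal (sqrt eps) * ennreal (sqrt (f x * g x)) \<partial>M)"
  proof (rule nn_integral_mono)
    fix x
    have "sqrt (f x * ((1 - eps) * f x + eps * g x)) = sqrt ((1 - eps) * (f x)\<^sup>2 + eps * (f x * g x))"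
      by (simp add: algebra_simps power2_eq_square)
    also have "\<dots> \<le> sqrt ((1 - eps) * (f x)\<^sup>2) + sqrt (eps * (f x * g x))"
      using assms by (intro sqrt_add_le_add_sqrt) auto
    also have "\<dots> = sqrt (1 - eps) * f x + sqrt eps * sqrt (f x * g x)"
      using assms by (simp add: real_sqrt_mult)
    finally show "ennreal (sqrt (f x * ((1 - eps) * f x + eps * g x)))
        \<le> ennreal (sqrt (1 - eps)) * ennreal (f x) + ennreal (sqrt eps) * ennreal (sqrt (f x * g x))"
      using assms by (simp add: ennreal_leI flip: ennreal_mult' ennreal_plus)
  qed
  also have "\<dots> = ennreal (sqrt (1 - eps)) + ennreal (sqrt eps) * (\<integral>\<^sup>+x. ennreal (sqrt (f x * g x)) \<partial>M)"
    by (subst nn_integral_add) (auto simp: nn_integral_cmult f1)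
  finally show ?thesis .
qed

lemma borel_measurable_lik0[measurable]: "lik0 n p s1 \<in> borel_measurable (sample_space n p)"
  unfolding lik0_def[abs_def] sample_space_def by measurable

lemma borel_measurable_lik1[measurable]: "lik1 n p s1 s2 eps A \<in> borel_measurable (sample_space n p)"
  unfolding lik1_def[abs_def] sample_space_def by measurable

lemma lik0_pos: "s1 > 0 \<Longrightarrow> lik0 n p s1 X > 0"
  unfolding lik0_def by (intro prod_pos) (auto intro: gauss_vec_density_pos)

lemma lik1_nonneg: "0 \<le> eps \<Longrightarrow> eps \<le> 1 \<Longrightarrow> lik1 n p s1 s2 eps A X \<ge> 0"
  unfolding lik1_def
  by (intro prod_nonneg add_nonneg_nonneg mult_nonneg_nonneg) (auto intro: gauss_vec_density_nonneg)

lemma nn_integral_lik_affinity_le: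
  fixes s1 s2 A eps :: real
  assumes "s1 > 0" "s2 > 0" "0 \<le> eps" "eps \<le> 1"
  shows "(\<integral>\<^sup>+X. ennreal (sqrt (lik0 n p s1 X * lik1 n p s1 s2 eps A X)) \<partial>sample_space n p)
     \<le> ennreal ((sqrt (1 - eps) + sqrt eps * exp (-(A\<^sup>2) / (4 * (s1\<^sup>2 + s2\<^sup>2))) ^ p) ^ n)"
proof -
  let ?f = "gauss_vec_density p 0 s1" and ?g = "gauss_vec_density p A s2"
  let ?h = "\<lambda>x. ennreal (sqrt (?f x * ((1 - eps) * ?f x + eps * ?g x)))"
  have "\<And>x. 0 \<le> (1 - eps) * ?f x + eps * ?g x"
    using assms gauss_vec_density_nonneg by (intro add_nonneg_nonneg mult_nonneg_nonneg) auto
  then have "(\<integral>\<^sup>+X. ennreal (sqrt (lik0 n p s1 X * lik1 n p s1 s2 eps A X)) \<partial>sample_space n p)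
      = (\<integral>\<^sup>+x. ?h x \<partial>obs_space p) ^ n"
    using nn_integral_PiM_prod_power[OF sigma_finite_obs_space, of "{..<n}" ?h]
    unfolding lik0_def lik1_def sample_space_def
    by (simp add: prod_ennreal real_sqrt_prod real_sqrt_mult gauss_vec_density_nonneg flip: prod.distrib)
  also have "\<dots> \<le> (ennreal (sqrt (1 - eps)) + ennreal (sqrt eps) * ennreal (exp (-(A\<^sup>2) / (4 * (s1\<^sup>2 + s2\<^sup>2))) ^ p)) ^ n"
    using nn_integral_gauss_vec_density_affinity_le[OF assms(1,2), of p 0 A]
    by (intro power_mono order.trans[OF nn_integral_sqrt_mixture_le] add_left_mono mult_left_mono)
       (auto simp: gauss_vec_density_nonneg nn_integral_gauss_vec_density assms)
  also have "\<dots> = ennreal ((sqrt (1 - eps) + sqrt eps * exp (-(A\<^sup>2) / (4 * (s1\<^sup>2 + s2\<^sup>2))) ^ p) ^ n)"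
    using assms by (simp add: ennreal_power flip: ennreal_mult' ennreal_plus)
  finally show ?thesis .
qed

lemma likelihood_ratio_errors_le_affinity:
  fixes f g :: "'a \<Rightarrow> real"
  assumes [measurable]: "f \<in> borel_measurable M" "g \<in> borel_measurable M"
    and pos: "\<And>x. x \<in> space M \<Longrightarrow> f x > 0" and nonneg: "\<And>x. x \<in> space M \<Longrightarrow> g x \<ge> 0"
  defines "R \<equiv> {x \<in> space M. g x / f x > 1}"
  shows "emeasure (density M f) R + emeasure (density M g) (space M - R)
       \<le> (\<integral>\<^sup>+x. ennreal (sqrt (f x * g x)) \<partial>M)"
proof -
  have R[measurable]: "R \<in> sets M" unfolding R_def by measurable
  have "emeasure (density M f) R + emeasure (density M g) (space M - R)
      = (\<integral>\<^sup>+x. indicator R x * ennreal (f x) + indicator (space M - R) x * ennreal (g x) \<partial>M)"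
    by (simp add: emeasure_density nn_integral_add mult.commute)
  also have "\<dots> \<le> (\<integral>\<^sup>+x. ennreal (sqrt (f x * g x)) \<partial>M)"
  proof (rule nn_integral_mono)
    fix x assume x: "x \<in> space M"
    show "indicator R x * ennreal (f x) + indicator (space M - R) x * ennreal (g x)
        \<le> ennreal (sqrt (f x * g x))"
    proof (cases "x \<in> R")
      case True
      then have "f x \<le> g x" using pos[OF x] unfolding R_def by (simp add: less_divide_eq)
      then have "sqrt (f x * f x) \<le> sqrt (f x * g x)"
        using pos[OF x] by (intro real_sqrt_le_mono mult_left_mono) auto
      then show ?thesis using True pos[OF x] by (simp add: ennreal_leI)
    next
      case False
      then have "g x \<le> f x" using x pos[OF x] unfolding R_def by (simp add: divide_le_eq)
      then have "sqrt (g x * g x) \<le> sqrt (f x * g x)"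
        using nonneg[OF x] by (intro real_sqrt_le_mono mult_right_mono) auto
      then show ?thesis using False x nonneg[OF x] by (simp add: ennreal_leI)
    qed
  qed
  finally show ?thesis .
qed

lemma lrt_total_error_le:
  fixes s1 s2 A eps :: real
  assumes "s1 > 0" "s2 > 0" "0 \<le> eps" "eps \<le> 1"
  shows "lrt_total_error n p s1 s2 eps A
     \<le> (sqrt (1 - eps) + sqrt eps * exp (-(A\<^sup>2) / (4 * (s1\<^sup>2 + s2\<^sup>2))) ^ p) ^ n"
    (is "_ \<le> ?b")
proof -
  let ?M = "sample_space n p" and ?R = "lrt_reject n p s1 s2 eps A"
  let ?e0 = "emeasure (law0 n p s1) ?R" and ?e1 = "emeasure (law1 n p s1 s2 eps A) (space ?M - ?R)"
  have "?e0 + ?e1 \<le> ennreal ?b"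
    using likelihood_ratio_errors_le_affinity[of "lik0 n p s1" ?M "lik1 n p s1 s2 eps A"]
      nn_integral_lik_affinity_le[OF assms, of n p A]
    unfolding law0_def law1_def lrt_reject_def
    by (auto simp: lik0_pos lik1_nonneg assms)
  moreover from this have "?e0 < \<top>" "?e1 < \<top>"
    by (auto simp: top_unique less_top[symmetric] dest: order.strict_trans1[OF _ ennreal_less_top])
  ultimately show ?thesis
    unfolding lrt_total_error_def measure_def
    by (simp add: enn2real_leI assms flip: enn2real_plus)
qed

lemma powr_neg_le_one: "1 \<le> x \<Longrightarrow> 0 \<le> b \<Longrightarrow> x powr (-b) \<le> (1::real)"
  using powr_mono[of "-b" 0 x] by simp

lemma exp_signal_power_le_inverse:
  fixes N P :: nat and r S :: real
  assumes "N \<ge> 1" "r > 0" "S > 0" "2 * S \<le> real P * r"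
  shows "exp (-((sqrt (2 * r * ln (real N)))\<^sup>2) / (4 * S)) ^ P \<le> 1 / real N"
proof -
  have lnN: "ln (real N) \<ge> 0" using assms(1) by simp
  have "ln (real N) \<le> real P * (2 * r * ln (real N)) / (4 * S)"
    using mult_left_mono[OF assms(4) lnN] assms(3) by (simp add: field_simps)
  then have "exp (-((sqrt (2 * r * ln (real N)))\<^sup>2) / (4 * S)) ^ P \<le> exp (- ln (real N))"
    using lnN assms(2) by (simp add: mult_ac flip: exp_of_nat_mult)
  also have "\<dots> = 1 / real N" using assms(1) by (simp add: exp_minus inverse_eq_divide)
  finally show ?thesis .
qed

lemma sqrt_one_minus_add_le:
  fixes N :: nat and \<beta> \<delta> :: real
  assumes "N \<ge> 16" "0 \<le> \<beta>" "\<beta> \<le> 1" "0 \<le> \<delta>" "\<delta> \<le> 1 / real N"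
  defines "\<epsilon> \<equiv> real N powr (-\<beta>)"
  shows "sqrt (1 - \<epsilon>) + sqrt \<epsilon> * \<delta> \<le> 1 - \<epsilon> / 4"
proof -
  have N1: "real N \<ge> 1" using assms(1) by simp
  have \<epsilon>: "0 \<le> \<epsilon>" "\<epsilon> \<le> 1" unfolding \<epsilon>_def using N1 assms(2) by (auto intro: powr_neg_le_one)
  have "sqrt (1 - \<epsilon>) \<le> 1 - \<epsilon> / 2"
    using \<epsilon> by (intro real_le_lsqrt) (auto simp: power2_eq_square algebra_simps)
  moreover have "sqrt \<epsilon> * \<delta> \<le> \<epsilon> / 4"
  proof -
    have "4 \<le> real N powr (1/2)" using assms(1) by (simp add: powr_half_sqrt real_le_rsqrt)
    also have "\<dots> \<le> real N powr (1 - \<beta>/2)" using N1 assms(3) by (intro powr_mono) auto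
    also have "\<dots> = real N powr 1 * real N powr (-\<beta>/2)" by (subst powr_add[symmetric]) simp
    also have "\<dots> = sqrt \<epsilon> * real N"
      unfolding \<epsilon>_def using powr_half_sqrt_powr[of "real N" "-\<beta>"] by simp
    finally have "sqrt \<epsilon> * 4 \<le> sqrt \<epsilon> * (sqrt \<epsilon> * real N)"
      using \<epsilon> by (intro mult_left_mono) auto
    then have "sqrt \<epsilon> * (1 / real N) \<le> \<epsilon> / 4" using \<epsilon> N1 by (simp add: field_simps)
    moreover have "sqrt \<epsilon> * \<delta> \<le> sqrt \<epsilon> * (1 / real N)" using assms(5) \<epsilon> by (intro mult_left_mono) auto
    ultimately show ?thesis by linarith
  qed
  ultimately show ?thesis by linarith
qed

lemma affinity_power_le_exp:
  fixes N :: nat and \<beta> \<delta> :: real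
  assumes "N \<ge> 16" "0 \<le> \<beta>" "\<beta> \<le> 1" "0 \<le> \<delta>" "\<delta> \<le> 1 / real N"
  shows "(sqrt (1 - real N powr (-\<beta>)) + sqrt (real N powr (-\<beta>)) * \<delta>) ^ N
       \<le> exp (-(real N powr (1 - \<beta>)) / 4)"
proof -
  define \<epsilon> where "\<epsilon> = real N powr (-\<beta>)"
  have \<epsilon>: "0 \<le> \<epsilon>" "\<epsilon> \<le> 1" unfolding \<epsilon>_def using assms(1,2) by (auto intro: powr_neg_le_one)
  have "(sqrt (1 - \<epsilon>) + sqrt \<epsilon> * \<delta>) ^ N \<le> (1 - (real N * \<epsilon> / 4) / real N) ^ N"
    using sqrt_one_minus_add_le[OF assms, folded \<epsilon>_def] \<epsilon> assms(1,4)
    by (intro power_mono) (auto simp: field_simps)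
  also have "\<dots> \<le> exp (-(real N * \<epsilon> / 4))"
    using \<epsilon> assms(1) by (intro exp_ge_one_minus_x_over_n_power_n) auto
  also have "real N * \<epsilon> = real N powr (1 - \<beta>)"
    unfolding \<epsilon>_def using assms(1) by (simp add: powr_diff powr_minus divide_inverse)
  finally show ?thesis unfolding \<epsilon>_def by simp
qed

lemma lrt_total_error_le_exp:
  fixes N P :: nat and \<sigma>1 \<sigma>2 \<beta> r :: real
  assumes "\<sigma>1 > 0" "\<sigma>2 > 0" "0 \<le> \<beta>" "\<beta> \<le> 1" "r > 0" "N \<ge> 16"
    and "2 * (\<sigma>1\<^sup>2 + \<sigma>2\<^sup>2) \<le> real P * r"
  shows "lrt_total_error N P \<sigma>1 \<sigma>2 (real N powr (-\<beta>)) (sqrt (2 * r * ln (real N)))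
       \<le> exp (-(real N powr (1 - \<beta>)) / 4)"
proof -
  let ?\<epsilon> = "real N powr (-\<beta>)" and ?A = "sqrt (2 * r * ln (real N))"
  have S: "\<sigma>1\<^sup>2 + \<sigma>2\<^sup>2 > 0" using assms(1,2) by (simp add: add_pos_pos)
  have "?\<epsilon> \<le> 1" using assms(3,6) by (intro powr_neg_le_one) auto
  then have "lrt_total_error N P \<sigma>1 \<sigma>2 ?\<epsilon> ?A
      \<le> (sqrt (1 - ?\<epsilon>) + sqrt ?\<epsilon> * exp (-(?A\<^sup>2) / (4 * (\<sigma>1\<^sup>2 + \<sigma>2\<^sup>2))) ^ P) ^ N"
    using assms(1,2) by (intro lrt_total_error_le) auto
  also have "\<dots> \<le> exp (-(real N powr (1 - \<beta>)) / 4)"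
    using assms S by (intro affinity_power_le_exp exp_signal_power_le_inverse) auto
  finally show ?thesis .
qed

theorem theorem2p8:
  fixes \<sigma>1 \<sigma>2 \<beta> r :: real and n p :: "nat \<Rightarrow> nat"
  assumes "\<sigma>1 > 0" "\<sigma>2 > 0" "0 < \<beta>" "\<beta> < 1" "0 < r" "r < 1"
    and "filterlim n at_top sequentially" "filterlim p at_top sequentially"
    and "(\<lambda>k. ln (real (n k)) / real (p k)) \<longlonglongrightarrow> 0"
  shows "(\<lambda>k. lrt_total_error (n k) (p k) \<sigma>1 \<sigma>2
            (real (n k) powr (-\<beta>)) (sqrt (2 * r * ln (real (n k)))))
         \<longlonglongrightarrow> 0"
proof -
  have "eventually (\<lambda>k. n k \<ge> 16) sequentially"
    using assms(7) by (simp add: filterlim_at_top)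
  moreover have "eventually (\<lambda>k. 2 * (\<sigma>1\<^sup>2 + \<sigma>2\<^sup>2) / r \<le> real (p k)) sequentially"
    using filterlim_compose[OF filterlim_real_sequentially assms(8)] by (simp add: filterlim_at_top)
  ultimately have bound: "eventually (\<lambda>k. lrt_total_error (n k) (p k) \<sigma>1 \<sigma>2
      (real (n k) powr (-\<beta>)) (sqrt (2 * r * ln (real (n k)))) \<le> exp (-(real (n k) powr (1 - \<beta>)) / 4))
      sequentially"
    by eventually_elim (rule lrt_total_error_le_exp, use assms(1-5) in \<open>auto simp: field_simps\<close>)
  have "((\<lambda>x::real. exp (-(x powr (1 - \<beta>)) / 4)) \<longlongrightarrow> 0) at_top"
    using assms(4) by real_asymp
  then have lim: "(\<lambda>k. exp (-(real (n k) powr (1 - \<beta>)) / 4)) \<longlonglongrightarrow> 0"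
    using filterlim_compose[OF _ filterlim_compose[OF filterlim_real_sequentially assms(7)]] by blast
  have "\<forall>k. 0 \<le> lrt_total_error (n k) (p k) \<sigma>1 \<sigma>2
      (real (n k) powr (-\<beta>)) (sqrt (2 * r * ln (real (n k))))"
    by (simp add: lrt_total_error_def)
  then show ?thesis
    using tendsto_sandwich[OF _ bound tendsto_const lim] by (simp add: always_eventually)
qed

end
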